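(* Suppose that $X$ is a metric space containing at most $k$ pairwise disjoint cones, that is, $|I|\le k$ for every family $(C(x_i,y_i))_{i\in I}$ of pairwise disjoint cones in $X$. Then $\mathrm{rk}(A)\le\frac12 k$ for all $A\in\mathscr A(X)$.
   Context: $I(x,y)=\{v: d(x,v)+d(v,y)=d(x,y)\}$, $C(x,v)=\{y\in X: v\in I(x,y)\}$. For $f\colon X\to\mathbb R$, $A(f)$ is the set of unordered pairs $\{x,y\}$ ($x=y$ allowed) with $f(x)+f(y)=d(x,y)$; $\Delta(X)=\{f: f(x)+f(y)\ge d(x,y)\ \forall x,y\}$; $\mathscr A(X)=\{A(f): f\in\Delta(X),\ \bigcup A(f)=X\}$. For $A\in\mathscr A(X)$, $\mathrm{rk}(A)$ is the dimension of the affine space $H(A)=\{g\in\mathbb R^X: g(x)+g(y)=d(x,y)\ \forall\{x,y\}\in A\}$. *)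

theory Defs
  imports Complex_Main "HOL-Library.Extended_Nat"
begin

text \<open>The metric space X is the whole type 'a (class metric_space), with d = dist.\<close>

definition interval :: "'a::metric_space \<Rightarrow> 'a \<Rightarrow> 'a set" where
  "interval x y = {v. dist x v + dist v y = dist x y}"

definition cone :: "'a::metric_space \<Rightarrow> 'a \<Rightarrow> 'a set" where
  "cone x v = {y. v \<in> interval x y}"

text \<open>Unordered pairs {x,y} (x = y allowed) are represented as sets {x,y}.\<close>
definition Apairs :: "('a::metric_space \<Rightarrow> real) \<Rightarrow> 'a set set" where
  "Apairs f = {{x, y} | x y. f x + f y = dist x y}"

definition Delta :: "('a::metric_space \<Rightarrow> real) set" where
  "Delta = {f. \<forall>x y. f x + f y \<ge> dist x y}"

definition scrA :: "'a::metric_space set set set" where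
  "scrA = {Apairs f | f. f \<in> Delta \<and> \<Union>(Apairs f) = UNIV}"

definition H :: "'a::metric_space set set \<Rightarrow> ('a \<Rightarrow> real) set" where
  "H A = {g. \<forall>x y. {x, y} \<in> A \<longrightarrow> g x + g y = dist x y}"

definition lin_indep :: "('a \<Rightarrow> real) set \<Rightarrow> bool" where
  "lin_indep B \<longleftrightarrow> finite B \<and>
     (\<forall>c. (\<lambda>x. \<Sum>b\<in>B. c b * b x) = (\<lambda>x. 0) \<longrightarrow> (\<forall>b\<in>B. c b = 0))"

text \<open>Dimension of the affine space H(A): dimension (possibly infinite) of its
  direction space {g - h | g h in H(A)}, i.e. the supremum of the sizes of
  finite linearly independent subsets.\<close>
definition rk :: "'a::metric_space set set \<Rightarrow> enat" where
  "rk A = Sup {enat (card B) | B. B \<subseteq> {g - h | g h. g \<in> H A \<and> h \<in> H A} \<and> lin_indep B}"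

end

theory Submission
  imports Defs "HOL-Library.Function_Algebras"
begin

text \<open>Let \<open>f \<in> \<Delta>(X)\<close> with \<open>\<Union>A(f) = X\<close> and let \<open>B\<close> be a finite independent set of directions
  of \<open>H(A(f))\<close>, so that \<open>b x = - b y\<close> for \<open>b \<in> B\<close> and \<open>{x,y} \<in> A(f)\<close>. If \<open>{x,y} \<in> A(f)\<close>,
  \<open>z \<in> C(x,y)\<close> and \<open>{z,w} \<in> A(f)\<close>, the triangle inequality forces \<open>{y,w} \<in> A(f)\<close>; hence the
  profile \<open>v z = (b z)\<close>, \<open>b \<in> B\<close>, is constant on \<open>C(x,y)\<close>. Choosing for every profile \<open>q\<close> a
  point \<open>z\<close> with \<open>v z = q\<close> and a partner \<open>x\<close> of \<open>z\<close> gives pairwise disjoint cones \<open>C(x,z)\<close>, so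
  there are at most \<open>k\<close> profiles. The nonzero profiles come in pairs \<open>\<plusminus>q\<close>, and \<open>B\<close> lies in
  the span of one signed indicator function \<open>[v = q] - [v = -q]\<close> per pair, whence \<open>2 |B| \<le> k\<close>.\<close>

definition disjoint_cones :: "('a::metric_space \<times> 'a) set \<Rightarrow> bool" where
  "disjoint_cones P \<longleftrightarrow>
     (\<forall>p\<in>P. \<forall>q\<in>P. p \<noteq> q \<longrightarrow> cone (fst p) (snd p) \<inter> cone (fst q) (snd q) = {})"

lemma card_range_le_if_constant_on_cones:
  fixes v :: "'a::metric_space \<Rightarrow> 'b"
  assumes few_cones: "\<forall>P :: ('a \<times> 'a) set. disjoint_cones P \<longrightarrow> finite P \<and> card P \<le> k"
    and on_cones: "\<And>z. \<exists>x. \<forall>y\<in>cone x z. v y = v z"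
  shows "finite (range v) \<and> card (range v) \<le> k"
proof -
  obtain x where x: "\<And>z y. y \<in> cone (x z) z \<Longrightarrow> v y = v z"
    using on_cones by metis
  define apex where "apex c = inv v c" for c
  have v_apex: "v (apex c) = c" if "c \<in> range v" for c
    using that by (simp add: apex_def f_inv_into_f)
  define P where "P = (\<lambda>c. (x (apex c), apex c)) ` range v"
  have inj: "inj_on (\<lambda>c. (x (apex c), apex c)) (range v)"
    by (rule inj_onI) (metis v_apex prod.inject)
  have cone_level: "cone (x (apex c)) (apex c) \<subseteq> v -` {c}" if "c \<in> range v" for c
    using x v_apex[OF that] by auto
  have "disjoint_cones P"
    unfolding disjoint_cones_def
  proof (intro ballI impI)
    fix p q
    assume "p \<in> P" "q \<in> P" "p \<noteq> q"
    obtain c where c: "c \<in> range v" "p = (x (apex c), apex c)"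
      using \<open>p \<in> P\<close> unfolding P_def by blast
    obtain c' where c': "c' \<in> range v" "q = (x (apex c'), apex c')"
      using \<open>q \<in> P\<close> unfolding P_def by blast
    have "c \<noteq> c'"
      using \<open>p \<noteq> q\<close> c c' by blast
    moreover have "cone (fst p) (snd p) \<subseteq> v -` {c}" "cone (fst q) (snd q) \<subseteq> v -` {c'}"
      using cone_level c c' by auto
    ultimately show "cone (fst p) (snd p) \<inter> cone (fst q) (snd q) = {}"
      by blast
  qed
  then have "finite P \<and> card P \<le> k"
    using few_cones by blast
  then show ?thesis
    using inj finite_imageD card_image unfolding P_def by metis
qed

lemma Apairs_iff: "{a, b} \<in> Apairs f \<longleftrightarrow> f a + f b = dist a b"
  unfolding Apairs_def by (auto simp: doubleton_eq_iff add.commute dist_commute)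

lemma Apairs_partner:
  assumes "\<Union>(Apairs f) = UNIV"
  obtains w where "{z, w} \<in> Apairs f"
proof -
  obtain S where "S \<in> Apairs f" "z \<in> S"
    using assms by blast
  moreover obtain x y where "S = {x, y}"
    using \<open>S \<in> Apairs f\<close> unfolding Apairs_def by blast
  ultimately show thesis
    using that by (auto simp: insert_commute)
qed

text \<open>\<open>f y + f w = (f x + f y) + (f z + f w) - (f x + f z) \<le> d(x,y) + d(z,w) - d(x,z)
  = d(z,w) - d(y,z) \<le> d(y,w)\<close>, using \<open>d(x,z) = d(x,y) + d(y,z)\<close>.\<close>
lemma Apairs_cone_transfer:
  assumes f: "f \<in> Delta" and xy: "{x, y} \<in> Apairs f" and zw: "{z, w} \<in> Apairs f"
    and z: "z \<in> cone x y"
  shows "{y, w} \<in> Apairs f"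
proof -
  have "dist x y + dist y z = dist x z"
    using z unfolding cone_def interval_def by simp
  moreover have "f x + f z \<ge> dist x z" "f y + f w \<ge> dist y w"
    using f unfolding Delta_def by auto
  moreover have "dist z w \<le> dist z y + dist y w"
    by (rule dist_triangle)
  ultimately have "f y + f w = dist y w"
    using xy zw by (simp add: Apairs_iff dist_commute)
  then show ?thesis
    by (simp add: Apairs_iff)
qed

lemma H_direction_antisymmetric:
  assumes "g \<in> H A" "h \<in> H A" "{x, y} \<in> A"
  shows "(g - h) x + (g - h) y = 0"
  using assms unfolding H_def by (auto simp: algebra_simps)

lemma symmetric_set_split:
  fixes S :: "'a::ab_group_add set"
  assumes "finite S" "\<And>x. x \<in> S \<Longrightarrow> - x \<in> S \<and> - x \<noteq> x"
  obtains Y where "S = Y \<union> uminus ` Y" "Y \<inter> uminus ` Y = {}"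
  using assms
proof (induction "card S" arbitrary: S thesis rule: less_induct)
  case less
  show ?case
  proof (cases "S = {}")
    case True
    then show ?thesis
      using less.prems(1) by blast
  next
    case False
    then obtain s where s: "s \<in> S"
      by blast
    define S' where "S' = S - {s, - s}"
    have "card S' < card S"
      unfolding S'_def using s less.prems(2) by (intro psubset_card_mono) auto
    moreover have "\<And>x. x \<in> S' \<Longrightarrow> - x \<in> S' \<and> - x \<noteq> x"
      unfolding S'_def using less.prems(3) by (auto simp: minus_equation_iff)
    ultimately obtain Y where Y: "S' = Y \<union> uminus ` Y" "Y \<inter> uminus ` Y = {}"
      using less.hyps less.prems(2) unfolding S'_def by (metis finite_Diff)
    have "- s \<notin> Y" "s \<notin> uminus ` Y"
      using Y(1) unfolding S'_def by auto
    moreover have "S = S' \<union> {s, - s}"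
      unfolding S'_def using s less.prems(3) by auto
    ultimately show ?thesis
      using less.prems(1)[of "insert s Y"] less.prems(3)[OF s] Y by auto
  qed
qed

text \<open>Function types carry no \<open>real_vector\<close> instance, so scalar multiplication is explicit.\<close>
definition scale_fun :: "real \<Rightarrow> ('a \<Rightarrow> real) \<Rightarrow> 'a \<Rightarrow> real" where
  "scale_fun r f = (\<lambda>x. r * f x)"

interpretation fun_vs: vector_space "scale_fun :: real \<Rightarrow> ('a \<Rightarrow> real) \<Rightarrow> _"
  by unfold_locales (auto simp: scale_fun_def fun_eq_iff algebra_simps)

lemma sum_apply: "(\<Sum>i\<in>I. F i) x = (\<Sum>i\<in>I. F i x)"
  by (induction I rule: infinite_finite_induct) auto

lemma lin_indep_imp_independent:
  assumes "lin_indep B"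
  shows "fun_vs.independent B"
proof (rule fun_vs.independent_if_scalars_zero)
  show "finite B"
    using assms unfolding lin_indep_def by blast
  fix c b
  assume "(\<Sum>b\<in>B. scale_fun (c b) b) = 0" "b \<in> B"
  then show "c b = 0"
    using assms unfolding lin_indep_def by (simp add: fun_eq_iff sum_apply scale_fun_def)
qed

lemma card_independent_le_half_nonzero_values:
  fixes v :: "'a \<Rightarrow> ('a \<Rightarrow> real) \<Rightarrow> real"
  assumes B: "lin_indep B" and fin: "finite (range v)"
    and profile: "\<And>b z. b \<in> B \<Longrightarrow> v z b = b z"
    and symmetric: "\<And>z. \<exists>w. v w = - v z"
  shows "2 * card B \<le> card (range v - {0})"
proof -
  define Q where "Q = range v - {0}"
  have "finite Q"
    using fin by (simp add: Q_def)
  moreover have "- q \<in> Q \<and> - q \<noteq> q" if q: "q \<in> Q" for q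
  proof -
    obtain z where "q = v z" "q \<noteq> 0"
      using q unfolding Q_def by blast
    moreover have "- q \<noteq> q"
      using \<open>q \<noteq> 0\<close> by (auto simp: fun_eq_iff)
    ultimately show ?thesis
      using symmetric[of z] by (auto simp: Q_def) (metis rangeI)
  qed
  ultimately obtain Y where QY: "Q = Y \<union> uminus ` Y" "Y \<inter> uminus ` Y = {}"
    using symmetric_set_split by blast
  have "finite Y"
    using \<open>finite Q\<close> QY(1) by simp
  have card_Q: "card Q = 2 * card Y"
    using QY \<open>finite Y\<close> by (simp add: card_Un_disjoint card_image)
  have sign_cases: "v z = 0 \<or> (v z \<in> Y \<and> - v z \<notin> Y) \<or> (- v z \<in> Y \<and> v z \<notin> Y)" for z
  proof (cases "v z = 0")
    case False
    then have "v z \<in> Y \<union> uminus ` Y"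
      using QY(1) by (auto simp: Q_def)
    then show ?thesis
      using QY(2) by (auto simp: disjoint_iff)
  qed simp
  define \<phi> where "\<phi> q z = (if v z = q then 1 else 0) - (if v z = - q then 1 else 0 :: real)" for q z
  have expansion: "b = (\<Sum>q\<in>Y. scale_fun (q b) (\<phi> q))" if "b \<in> B" for b
  proof
    fix z
    have "(\<Sum>q\<in>Y. scale_fun (q b) (\<phi> q)) z
        = (\<Sum>q\<in>Y. if v z = q then q b else 0) - (\<Sum>q\<in>Y. if - v z = q then q b else 0)"
      unfolding sum_apply scale_fun_def \<phi>_def sum_subtractf[symmetric]
      by (intro sum.cong) auto
    also have "\<dots> = (if v z \<in> Y then v z b else 0) - (if - v z \<in> Y then (- v z) b else 0)"
      using \<open>finite Y\<close> by simp
    also have "\<dots> = b z"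
      using sign_cases[of z] profile[OF that, of z] by auto
    finally show "b z = (\<Sum>q\<in>Y. scale_fun (q b) (\<phi> q)) z"
      by simp
  qed
  have "B \<subseteq> fun_vs.span (\<phi> ` Y)"
  proof
    fix b
    assume "b \<in> B"
    have "(\<Sum>q\<in>Y. scale_fun (q b) (\<phi> q)) \<in> fun_vs.span (\<phi> ` Y)"
      by (intro fun_vs.span_sum fun_vs.span_scale fun_vs.span_base) simp
    with expansion[OF \<open>b \<in> B\<close>] show "b \<in> fun_vs.span (\<phi> ` Y)"
      by simp
  qed
  then have "card B \<le> card (\<phi> ` Y)"
    using fun_vs.independent_span_bound lin_indep_imp_independent[OF B] \<open>finite Y\<close> by blast
  also have "\<dots> \<le> card Y"
    using \<open>finite Y\<close> by (rule card_image_le)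
  finally show ?thesis
    using card_Q by (simp add: Q_def)
qed

lemma card_independent_directions_le:
  fixes f :: "'a::metric_space \<Rightarrow> real"
  assumes few_cones: "\<forall>P :: ('a \<times> 'a) set. disjoint_cones P \<longrightarrow> finite P \<and> card P \<le> k"
    and f: "f \<in> Delta" "\<Union>(Apairs f) = UNIV"
    and B: "B \<subseteq> {g - h | g h. g \<in> H (Apairs f) \<and> h \<in> H (Apairs f)}" "lin_indep B"
  shows "2 * card B \<le> k"
proof -
  define v where "v z = (\<lambda>b. if b \<in> B then b z else 0)" for z
  have v_partner: "v w = - v z" if "{z, w} \<in> Apairs f" for z w
  proof -
    have "b z + b w = 0" if "b \<in> B" for b
      using B(1) \<open>b \<in> B\<close> \<open>{z, w} \<in> Apairs f\<close> H_direction_antisymmetric by blast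
    then show ?thesis
      by (auto simp: v_def fun_eq_iff eq_neg_iff_add_eq_0 add.commute)
  qed
  have "\<exists>x. \<forall>y\<in>cone x z. v y = v z" for z
  proof -
    obtain x where "{z, x} \<in> Apairs f"
      using Apairs_partner[OF f(2)] .
    then have x: "{x, z} \<in> Apairs f"
      by (simp add: insert_commute)
    have "v y = v z" if "y \<in> cone x z" for y
    proof -
      obtain w where w: "{y, w} \<in> Apairs f"
        using Apairs_partner[OF f(2)] .
      moreover have "{z, w} \<in> Apairs f"
        using Apairs_cone_transfer[OF f(1) x w that] .
      ultimately show ?thesis
        using v_partner by (metis neg_equal_iff_equal)
    qed
    then show ?thesis
      by blast
  qed
  then have "finite (range v) \<and> card (range v) \<le> k"
    using card_range_le_if_constant_on_cones[OF few_cones] by blast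
  moreover have "2 * card B \<le> card (range v - {0})"
  proof (rule card_independent_le_half_nonzero_values[OF B(2)])
    show "finite (range v)"
      using \<open>finite (range v) \<and> card (range v) \<le> k\<close> by blast
    show "v z b = b z" if "b \<in> B" for b z
      using that by (simp add: v_def)
    show "\<exists>w. v w = - v z" for z
      using Apairs_partner[OF f(2)] v_partner by metis
  qed
  moreover have "card (range v - {0}) \<le> card (range v)"
    using calculation(1) by (intro card_mono) auto
  ultimately show ?thesis
    by linarith
qed

lemma twice_rk_le:
  fixes A :: "'a::metric_space set set"
  assumes "\<And>B. B \<subseteq> {g - h | g h. g \<in> H A \<and> h \<in> H A} \<Longrightarrow> lin_indep B \<Longrightarrow> 2 * card B \<le> k"
  shows "2 * rk A \<le> enat k"
proof -
  have "rk A \<le> enat (k div 2)"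
    unfolding rk_def
  proof (rule Sup_least)
    fix x
    assume "x \<in> {enat (card B) | B. B \<subseteq> {g - h | g h. g \<in> H A \<and> h \<in> H A} \<and> lin_indep B}"
    then obtain B :: "('a \<Rightarrow> real) set" where "x = enat (card B)" "2 * card B \<le> k"
      using assms by blast
    then show "x \<le> enat (k div 2)"
      by simp
  qed
  then have "2 * rk A \<le> 2 * enat (k div 2)"
    by (simp add: mult_left_mono)
  also have "\<dots> \<le> enat k"
    by (simp add: numeral_eq_enat)
  finally show ?thesis .
qed

theorem proposition5p3:
  fixes k :: nat
  assumes "\<forall>P :: ('a::metric_space \<times> 'a) set.
             (\<forall>p\<in>P. \<forall>q\<in>P. p \<noteq> q \<longrightarrow>
                cone (fst p) (snd p) \<inter> cone (fst q) (snd q) = {})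
             \<longrightarrow> finite P \<and> card P \<le> k"
  shows "\<forall>A \<in> (scrA :: 'a set set set). 2 * rk A \<le> enat k"
proof
  fix A :: "'a set set"
  assume "A \<in> scrA"
  then obtain f where f: "f \<in> Delta" "\<Union>(Apairs f) = UNIV" and A: "A = Apairs f"
    unfolding scrA_def by blast
  have few_cones: "\<forall>P :: ('a \<times> 'a) set. disjoint_cones P \<longrightarrow> finite P \<and> card P \<le> k"
    using assms unfolding disjoint_cones_def .
  show "2 * rk A \<le> enat k"
    unfolding A using card_independent_directions_le[OF few_cones f] by (rule twice_rk_le)
qed

end
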